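(* Let $n_i:=2^{2^i}$ and $t_n:=1/n$. If $100\le i<j$ then $f_{n_i}(t_{n_j})=0$ and $B_{n_j}(f_{n_i},t_{n_j})\ge -\frac{9}{8n_j}$.
   Context: Nodes: $x_{k,n}:=2k/n-1$, $k=0,\dots,n$. $B_n(f,x):=N_n(f,x)/D_n(x)$ for $x$ not a node, $B_n(f,x_{k,n}):=f(x_{k,n})$, with $N_n(f,x)=\sum_{k=0}^n(-1)^k\frac{f(x_{k,n})}{x-x_{k,n}}$, $D_n(x)=\sum_{k=0}^n(-1)^k\frac{1}{x-x_{k,n}}$. For $m$ such that $\sqrt m$ is an integer multiple of $4$, define $f_m:\mathbb{R}\to\mathbb{R}$ by: $f_m(x)=0$ for $x<1/m$ or $x\ge(\sqrt m-3)/m$; $f_m(x)=x-1/m$ for $1/m\le x<2/m$; $f_m(x)=\frac{4p+3}{m}-x$ for $0\le p\le\frac{\sqrt m-8}{4}$ and $\frac{4p+2}{m}\le x<\frac{4p+4}{m}$; $f_m(x)=x-\frac{4p+1}{m}$ for $1\le p\le\frac{\sqrt m-8}{4}$ and $\frac{4p}{m}\le x<\frac{4p+2}{m}$; $f_m(x)=x-\frac{\sqrt m-3}{m}$ for $\frac{\sqrt m-4}{m}\le x<\frac{\sqrt m-3}{m}$. *)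

theory Defs
  imports Complex_Main
begin

definition node :: "nat \<Rightarrow> nat \<Rightarrow> real" where
  "node n k = 2 * real k / real n - 1"

definition Nsum :: "nat \<Rightarrow> (real \<Rightarrow> real) \<Rightarrow> real \<Rightarrow> real" where
  "Nsum n f x = (\<Sum>k=0..n. (-1) ^ k * f (node n k) / (x - node n k))"

definition Dsum :: "nat \<Rightarrow> real \<Rightarrow> real" where
  "Dsum n x = (\<Sum>k=0..n. (-1) ^ k / (x - node n k))"

definition berrut :: "nat \<Rightarrow> (real \<Rightarrow> real) \<Rightarrow> real \<Rightarrow> real" where
  "berrut n f x = (if (\<exists>k\<le>n. x = node n k) then f x else Nsum n f x / Dsum n x)"

text \<open>The sawtooth function f_m (meaningful when sqrt m is a multiple of 4).\<close>
definition fm :: "nat \<Rightarrow> real \<Rightarrow> real" where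
  "fm m x = (let r = real m; s = sqrt r in
     if x < 1 / r \<or> x \<ge> (s - 3) / r then 0
     else if 1 / r \<le> x \<and> x < 2 / r then x - 1 / r
     else if (\<exists>p::nat. real p \<le> (s - 8) / 4 \<and> (4 * real p + 2) / r \<le> x \<and> x < (4 * real p + 4) / r)
       then (4 * real (SOME p::nat. real p \<le> (s - 8) / 4 \<and> (4 * real p + 2) / r \<le> x \<and> x < (4 * real p + 4) / r) + 3) / r - x
     else if (\<exists>p::nat. 1 \<le> p \<and> real p \<le> (s - 8) / 4 \<and> (4 * real p) / r \<le> x \<and> x < (4 * real p + 2) / r)
       then x - (4 * real (SOME p::nat. 1 \<le> p \<and> real p \<le> (s - 8) / 4 \<and> (4 * real p) / r \<le> x \<and> x < (4 * real p + 2) / r) + 1) / r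
     else if (s - 4) / r \<le> x \<and> x < (s - 3) / r then x - (s - 3) / r
     else 0)"

definition nseq :: "nat \<Rightarrow> nat" where
  "nseq i = 2 ^ (2 ^ i)"

definition tpt :: "nat \<Rightarrow> real" where
  "tpt n = 1 / real n"

end

theory Submission
  imports Defs
begin

(* Write m = S^2 and N = 4 m r. The point 1/N lies halfway between the nodes 0 and 2/N and below
   the support of f_m. After multiplication by N, the denominator becomes the sum of
   (-1)^k / (2h + 1 - 2k) with N = 2h: two central terms equal to 1, flanked by two alternating
   tails of decreasing terms, each at least -1/3, so D_N(1/N) >= 4N/3.
   In the numerator only the nodes from 1/m on contribute. They form a grid of mesh 1/(2rm), every
   cell [c/m, (c+1)/m] of f_m contains an even number of grid steps, and f_m is affine on each cell;
   hence f_m at the middle node of each pair of steps is the mean of its neighbours, the alternating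
   partial sums of N f_m at the nodes are at most half the bound |N f_m| <= 4r, and Abel summation
   against the decreasing weights 1/(4r - 1 + 2j) bounds the numerator below by -1.
   Altogether B_N(f_m, 1/N) >= -3/(4N). *)

lemma sum_lessThan_add:
  fixes f :: "nat \<Rightarrow> 'a::comm_monoid_add"
  shows "(\<Sum>k<a + b. f k) = (\<Sum>k<a. f k) + (\<Sum>i<b. f (a + i))"
  by (induction b) (simp_all add: add.assoc)

lemma alternating_sum_bounds:
  fixes b :: "nat \<Rightarrow> real"
  assumes "\<And>i. b (Suc i) \<le> b i" and "\<And>i. 0 \<le> b i"
  shows "0 \<le> (\<Sum>i<n. (-1)^i * b i) \<and> (\<Sum>i<n. (-1)^i * b i) \<le> b 0"
  using assms
proof (induction n arbitrary: b)
  case 0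
  then show ?case by simp
next
  case (Suc n)
  have "(\<Sum>i<Suc n. (-1)^i * b i) = b 0 - (\<Sum>i<n. (-1)^i * b (Suc i))"
    unfolding sum.lessThan_Suc_shift by (simp add: sum_negf[symmetric])
  moreover have "0 \<le> (\<Sum>i<n. (-1)^i * b (Suc i)) \<and> (\<Sum>i<n. (-1)^i * b (Suc i)) \<le> b 1"
    using Suc.IH[of "\<lambda>i. b (Suc i)"] Suc.prems by simp
  ultimately show ?case using Suc.prems(1)[of 0] by simp
qed

lemma alternating_sum_midpoint_affine:
  fixes G :: "nat \<Rightarrow> real"
  assumes "G 0 = 0" and "\<And>q. G (2*q) + G (2*q+2) = 2 * G (2*q+1)"
  shows "(\<Sum>j<2*Q. (-1)^j * G j) = - G (2*Q) / 2"
proof (induction Q)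
  case 0
  then show ?case using assms(1) by simp
next
  case (Suc Q)
  have "(\<Sum>j<2 * Suc Q. (-1)^j * G j) = (\<Sum>j<2*Q. (-1)^j * G j) + G (2*Q) - G (2*Q+1)"
    by simp
  then show ?case using Suc assms(2)[of Q] by simp
qed

lemma alternating_sum_midpoint_affine_le:
  fixes G :: "nat \<Rightarrow> real"
  assumes "G 0 = 0" and "\<And>q. G (2*q) + G (2*q+2) = 2 * G (2*q+1)"
    and bound: "\<And>j. \<bar>G j\<bar> \<le> B"
  shows "(\<Sum>j<n. (-1)^j * G j) \<le> B / 2"
proof (cases "even n")
  case True
  then obtain Q where "n = 2*Q" by blast
  then show ?thesis
    using alternating_sum_midpoint_affine[OF assms(1,2)] bound[of "2*Q"] by (simp add: abs_le_iff)
next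
  case False
  then obtain Q where "n = Suc (2*Q)" by (metis oddE Suc_eq_plus1)
  then show ?thesis
    using alternating_sum_midpoint_affine[OF assms(1,2)] bound[of "2*Q"] by (simp add: abs_le_iff)
qed

lemma abel_inequality:
  fixes a w :: "nat \<Rightarrow> real"
  assumes "\<And>j. w (Suc j) \<le> w j" and "\<And>j. 0 \<le> w j"
    and partial: "\<And>n. (\<Sum>j<n. a j) \<le> C"
  shows "(\<Sum>j<n. a j * w j) \<le> C * w 0"
proof -
  have invariant: "(\<Sum>j<n. a j * w j) \<le> C * w 0 - (C - (\<Sum>j<n. a j)) * w n" for n
  proof (induction n)
    case 0
    then show ?case by simp
  next
    case (Suc n)
    have "(C - (\<Sum>j<Suc n. a j)) * w (Suc n) \<le> (C - (\<Sum>j<Suc n. a j)) * w n"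
      using partial[of "Suc n"] assms(1)[of n] by (intro mult_left_mono) auto
    with Suc show ?case by (simp add: algebra_simps)
  qed
  have "0 \<le> (C - (\<Sum>j<n. a j)) * w n"
    using partial[of n] assms(2)[of n] by simp
  with invariant[of n] show ?thesis by linarith
qed

lemma alternating_odd_reciprocals_ge:
  fixes h :: nat
  assumes "even h" and "2 \<le> h"
  shows "4/3 \<le> (\<Sum>k\<le>2*h. (-1)^k / (2 * real h + 1 - 2 * real k))"
proof -
  define g where "g k = (-1::real)^k / (2 * real h + 1 - 2 * real k)" for k
  define b where "b i = 1 / (2 * real i + 3)" for i
  have tail: "(\<Sum>i<n. (-1)^i * b i) \<le> 1/3" for n
    using alternating_sum_bounds[of b n] unfolding b_def by (simp add: field_simps)
  have left: "(\<Sum>k<h. g k) = - (\<Sum>i<h. (-1)^i * b i)"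
  proof -
    have "g (h - Suc i) = - ((-1)^i * b i)" if "i < h" for i
    proof -
      have "(-1::real)^(h - Suc i) = - ((-1)^i)"
        using that \<open>even h\<close> by (simp add: minus_one_power_iff)
      moreover have "2 * real h + 1 - 2 * real (h - Suc i) = 2 * real i + 3"
        using that by (simp add: of_nat_diff)
      ultimately show ?thesis unfolding g_def b_def by simp
    qed
    then have "(\<Sum>i<h. g (h - Suc i)) = (\<Sum>i<h. - ((-1)^i * b i))" by simp
    then show ?thesis by (simp add: sum.nat_diff_reindex sum_negf)
  qed
  have right: "(\<Sum>i<h-1. g (h + 2 + i)) = - (\<Sum>i<h-1. (-1)^i * b i)"
  proof -
    have "g (h + 2 + i) = - ((-1)^i * b i)" for i
      using \<open>even h\<close> unfolding g_def b_def by (simp add: power_add divide_simps algebra_simps)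
    then show ?thesis by (simp add: sum_negf)
  qed
  have middle: "g h = 1" "g (h + 1) = 1" unfolding g_def using \<open>even h\<close> by simp_all
  have "h + (2 + (h - 1)) = Suc (2*h)" using \<open>2 \<le> h\<close> by simp
  then have "(\<Sum>k\<le>2*h. g k) = (\<Sum>k<h + (2 + (h - 1)). g k)"
    by (simp only: lessThan_Suc_atMost)
  also have "\<dots> = (\<Sum>k<h. g k) + g h + g (h + 1) + (\<Sum>i<h-1. g (h + 2 + i))"
    unfolding sum_lessThan_add by (simp add: numeral_2_eq_2 add.assoc)
  finally show ?thesis
    using left right middle tail[of h] tail[of "h - 1"] unfolding g_def by linarith
qed

lemma scaled_interval_iff:
  fixes a c x :: real
  assumes "0 < c"
  shows "a / c \<le> x \<longleftrightarrow> a \<le> c * x" and "x < a / c \<longleftrightarrow> c * x < a"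
  using assms by (simp_all add: pos_divide_le_eq pos_less_divide_eq mult.commute)

lemma nat_eq_if_abs_diff_less_1:
  fixes p q :: nat
  assumes "\<bar>real p - real q\<bar> < 1"
  shows "p = q"
proof -
  have "p < q + 1" and "q < p + 1" using assms by linarith+
  then show ?thesis by simp
qed

lemma fm_eq_0_below: "x < 1 / real m \<Longrightarrow> fm m x = 0"
  unfolding fm_def Let_def by simp

lemma fm_eq_0_outside:
  assumes "real m * x < 1 \<or> real S - 3 \<le> real m * x" and "m = S^2" and "0 < S"
  shows "fm m x = 0"
proof -
  have "0 < real m" using assms by simp
  then show ?thesis
    using assms unfolding fm_def Let_def by (auto simp: scaled_interval_iff)
qed

lemma fm_first_piece:
  assumes "1 \<le> real m * x" and "real m * x < 2" and "m = S^2" and "8 \<le> S"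
  shows "fm m x = x - 1 / real m"
proof -
  have "0 < real m" using assms by simp
  then show ?thesis
    using assms unfolding fm_def Let_def by (auto simp: scaled_interval_iff)
qed

lemma fm_descending_piece:
  assumes block: "4 * real p + 2 \<le> real m * x" "real m * x < 4 * real p + 4"
    and p: "4 * p + 8 \<le> S" and "m = S^2"
  shows "fm m x = (4 * real p + 3) / real m - x"
proof -
  have m: "0 < real m" using assms by simp
  have sqrt: "sqrt (real m) = real S" using assms by simp
  define P where "P q \<longleftrightarrow> real q \<le> (real S - 8) / 4 \<and>
    (4 * real q + 2) / real m \<le> x \<and> x < (4 * real q + 4) / real m" for q :: nat
  have "P p" using assms unfolding P_def scaled_interval_iff[OF m] by simp
  moreover have "q = p" if "P q" for q
    using that assms unfolding P_def scaled_interval_iff[OF m]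
    by (intro nat_eq_if_abs_diff_less_1) auto
  ultimately have "(SOME q. P q) = p" by (rule some_equality)
  with \<open>P p\<close> show ?thesis
    using block p unfolding fm_def Let_def sqrt P_def by (auto simp: scaled_interval_iff[OF m])
qed

lemma fm_ascending_piece:
  assumes block: "4 * real p \<le> real m * x" "real m * x < 4 * real p + 2"
    and p: "1 \<le> p" "4 * p + 8 \<le> S" and "m = S^2"
  shows "fm m x = x - (4 * real p + 1) / real m"
proof -
  have m: "0 < real m" using assms by simp
  have sqrt: "sqrt (real m) = real S" using assms by simp
  define P where "P q \<longleftrightarrow> 1 \<le> q \<and> real q \<le> (real S - 8) / 4 \<and>
    4 * real q / real m \<le> x \<and> x < (4 * real q + 2) / real m" for q :: nat
  have no_descent: "\<not> ((4 * real q + 2) / real m \<le> x \<and> x < (4 * real q + 4) / real m)" for q :: nat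
  proof
    assume "(4 * real q + 2) / real m \<le> x \<and> x < (4 * real q + 4) / real m"
    then have "q < p" and "p < q + 1"
      using assms unfolding scaled_interval_iff[OF m] by linarith+
    then show False by simp
  qed
  have "P p" using assms unfolding P_def scaled_interval_iff[OF m] by simp
  moreover have "q = p" if "P q" for q
    using that assms unfolding P_def scaled_interval_iff[OF m]
    by (intro nat_eq_if_abs_diff_less_1) auto
  ultimately have "(SOME q. P q) = p" by (rule some_equality)
  with \<open>P p\<close> no_descent show ?thesis
    using block p unfolding fm_def Let_def sqrt P_def by (auto simp: scaled_interval_iff[OF m])
qed

lemma fm_last_piece:
  assumes block: "real S - 4 \<le> real m * x" "real m * x < real S - 3" and "m = S^2" and "8 \<le> S"
  shows "fm m x = x - (real S - 3) / real m"
proof -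
  have m: "0 < real m" using assms by simp
  have sqrt: "sqrt (real m) = real S" using assms by simp
  have "\<not> ((4 * real q + 2) / real m \<le> x \<and> x < (4 * real q + 4) / real m)"
    if "real q \<le> (real S - 8) / 4" for q :: nat
    using that block unfolding scaled_interval_iff[OF m] by auto
  moreover have "\<not> (4 * real q / real m \<le> x \<and> x < (4 * real q + 2) / real m)"
    if "real q \<le> (real S - 8) / 4" for q :: nat
    using that block unfolding scaled_interval_iff[OF m] by auto
  ultimately show ?thesis
    using block \<open>8 \<le> S\<close> unfolding fm_def Let_def sqrt by (auto simp: scaled_interval_iff[OF m])
qed

definition sawtooth_piece :: "nat \<Rightarrow> nat \<Rightarrow> nat \<Rightarrow> real \<Rightarrow> real" where
  "sawtooth_piece S m c x =
     (if 1 \<le> c \<and> c + 4 \<le> S then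
        if 2 \<le> c mod 4 then (4 * real (c div 4) + 3) / real m - x
        else x - (4 * real (c div 4) + 1) / real m
      else 0)"

lemma fm_eq_sawtooth_piece:
  assumes mS: "m = S^2" and "4 dvd S" and "8 \<le> S"
    and "real c / real m \<le> x" and "x < (real c + 1) / real m"
  shows "fm m x = sawtooth_piece S m c x"
proof -
  have m: "0 < real m" using mS \<open>8 \<le> S\<close> by simp
  have cell: "real c \<le> real m * x" "real m * x < real c + 1"
    using assms(4,5) unfolding scaled_interval_iff[OF m] by simp_all
  obtain T where T: "S = 4 * T" using \<open>4 dvd S\<close> by blast
  define p where "p = c div 4"
  have c: "c = 4 * p + c mod 4" unfolding p_def by simp
  have p: "real c = 4 * real p + real (c mod 4)" by (subst c) simp
  consider "c = 0 \<or> S \<le> c + 3" | "c = 1" | "2 \<le> c mod 4" "c + 4 \<le> S"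
    | "c + 4 = S" | "c mod 4 < 2" "2 \<le> c" "c + 4 < S"
    by linarith
  then show ?thesis
  proof cases
    case 1
    then have "real m * x < 1 \<or> real S - 3 \<le> real m * x" using cell by auto
    with 1 show ?thesis using fm_eq_0_outside mS \<open>8 \<le> S\<close> unfolding sawtooth_piece_def by auto
  next
    case 2
    then show ?thesis using fm_first_piece cell mS \<open>8 \<le> S\<close> unfolding sawtooth_piece_def by auto
  next
    case 3
    have "4 * p + 8 \<le> S" using 3 c T by presburger
    moreover have "4 * real p + 2 \<le> real m * x" "real m * x < 4 * real p + 4"
      using 3 p cell mod_less_divisor[of 4 c] by linarith+
    ultimately show ?thesis using 3 fm_descending_piece mS unfolding sawtooth_piece_def p_def by auto
  next
    case 4
    then have "c mod 4 = 0" using T by presburger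
    then have "4 * real p + 1 = real S - 3" using 4 p by linarith
    have "fm m x = x - (real S - 3) / real m"
      using cell 4 by (intro fm_last_piece[OF _ _ mS \<open>8 \<le> S\<close>]) linarith+
    then show ?thesis using 4 \<open>8 \<le> S\<close> \<open>c mod 4 = 0\<close> \<open>4 * real p + 1 = real S - 3\<close>
      unfolding sawtooth_piece_def p_def by simp
  next
    case 5
    have "1 \<le> p" "4 * p + 8 \<le> S" using 5 c T by presburger+
    moreover have "4 * real p \<le> real m * x" "real m * x < 4 * real p + 2"
      using 5 p cell by linarith+
    ultimately show ?thesis using 5 fm_ascending_piece mS unfolding sawtooth_piece_def p_def by auto
  qed
qed

lemma sawtooth_piece_continuous:
  assumes "4 dvd S"
  shows "sawtooth_piece S m c ((real c + 1) / real m) =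
    sawtooth_piece S m (Suc c) ((real c + 1) / real m)"
proof -
  obtain T where T: "S = 4 * T" using assms by blast
  obtain q r where c: "c = 4 * q + r" and "r < 4"
    using div_mult_mod_eq[of c 4] mod_less_divisor[of 4 c] by (metis mult.commute zero_less_numeral)
  then consider "r = 0" | "r = 1" | "r = 2" | "r = 3" by arith
  then show ?thesis
  proof cases
    case 1
    then have "c div 4 = q" "c mod 4 = 0" "Suc c div 4 = q" "Suc c mod 4 = 1" using c by arith+
    then show ?thesis unfolding sawtooth_piece_def using c 1 T by (auto simp: add_divide_distrib)
  next
    case 2
    then have "c div 4 = q" "c mod 4 = 1" "Suc c div 4 = q" "Suc c mod 4 = 2" using c by arith+
    moreover have "c + 4 \<le> S \<longleftrightarrow> Suc c + 4 \<le> S" using c 2 T by presburger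
    ultimately show ?thesis unfolding sawtooth_piece_def using c 2 by (auto simp: add_divide_distrib)
  next
    case 3
    then have "c div 4 = q" "c mod 4 = 2" "Suc c div 4 = q" "Suc c mod 4 = 3" using c by arith+
    then show ?thesis unfolding sawtooth_piece_def using c 3 T by (auto simp: add_divide_distrib)
  next
    case 4
    then have "c div 4 = q" "c mod 4 = 3" "Suc c div 4 = Suc q" "Suc c mod 4 = 0" using c by arith+
    moreover have "c + 4 \<le> S \<longleftrightarrow> Suc c + 4 \<le> S" using c 4 T by presburger
    ultimately show ?thesis unfolding sawtooth_piece_def using c 4 by (auto simp: add_divide_distrib)
  qed
qed

lemma fm_eq_sawtooth_piece_closed:
  assumes mS: "m = S^2" and S: "4 dvd S" "8 \<le> S"
    and lo: "real c / real m \<le> x" and hi: "x \<le> (real c + 1) / real m"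
  shows "fm m x = sawtooth_piece S m c x"
proof (cases "x < (real c + 1) / real m")
  case True
  then show ?thesis using fm_eq_sawtooth_piece[OF mS S lo] by simp
next
  case False
  then have x: "x = (real c + 1) / real m" using hi by simp
  have "0 < real m" using mS S by simp
  then have "fm m x = sawtooth_piece S m (Suc c) x"
    by (intro fm_eq_sawtooth_piece[OF mS S]) (simp_all add: x field_simps)
  then show ?thesis using sawtooth_piece_continuous[OF S(1)] x by simp
qed

lemma sawtooth_piece_midpoint:
  "sawtooth_piece S m c a + sawtooth_piece S m c b = 2 * sawtooth_piece S m c ((a + b) / 2)"
  unfolding sawtooth_piece_def by (auto simp: field_simps)

lemma abs_sawtooth_piece_le:
  assumes m: "0 < real m" and cell: "real c / real m \<le> x" "x \<le> (real c + 1) / real m"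
  shows "\<bar>sawtooth_piece S m c x\<bar> \<le> 1 / real m"
proof -
  have u: "real c \<le> real m * x" "real m * x \<le> real c + 1"
    using cell m by (simp_all add: field_simps)
  have c: "real c = 4 * real (c div 4) + real (c mod 4)" and "c mod 4 < 4"
    by (metis div_mult_mod_eq of_nat_add of_nat_mult of_nat_numeral mult.commute) simp
  have "real m * sawtooth_piece S m c x =
    (if 1 \<le> c \<and> c + 4 \<le> S then
       if 2 \<le> c mod 4 then 4 * real (c div 4) + 3 - real m * x
       else real m * x - (4 * real (c div 4) + 1)
     else 0)"
    unfolding sawtooth_piece_def using m by (simp add: field_simps)
  then have "\<bar>real m * sawtooth_piece S m c x\<bar> \<le> 1"
    using u c \<open>c mod 4 < 4\<close> by (auto simp: abs_le_iff)
  then show ?thesis using m by (simp add: abs_mult field_simps)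
qed

lemma abs_fm_le:
  assumes mS: "m = S^2" and S: "4 dvd S" "8 \<le> S"
  shows "\<bar>fm m x\<bar> \<le> 1 / real m"
proof (cases "x < 1 / real m")
  case True
  then show ?thesis using fm_eq_0_below by simp
next
  case False
  have m: "0 < real m" using mS S by simp
  define c where "c = nat \<lfloor>real m * x\<rfloor>"
  have "0 \<le> real m * x" using False m by (simp add: field_simps)
  then have "real c \<le> real m * x" "real m * x < real c + 1" unfolding c_def by linarith+
  then have cell: "real c / real m \<le> x" "x < (real c + 1) / real m"
    unfolding scaled_interval_iff[OF m] by simp_all
  then show ?thesis
    using fm_eq_sawtooth_piece[OF mS S cell] abs_sawtooth_piece_le[OF m] by simp
qed

lemma fm_midpoint_affine:
  assumes mS: "m = S^2" and S: "4 dvd S" "8 \<le> S"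
    and "real c / real m \<le> a" and "a \<le> b" and "b \<le> (real c + 1) / real m"
  shows "fm m a + fm m b = 2 * fm m ((a + b) / 2)"
proof -
  have "fm m y = sawtooth_piece S m c y" if "a \<le> y" "y \<le> b" for y
    using that assms by (intro fm_eq_sawtooth_piece_closed[OF mS S]) simp_all
  then show ?thesis using \<open>a \<le> b\<close> sawtooth_piece_midpoint by simp
qed

lemma node_eq:
  assumes "0 < N"
  shows "node N k = (2 * real k - real N) / real N"
  using assms unfolding node_def by (simp add: field_simps)

lemma inverse_not_node:
  assumes "even N" and "0 < N"
  shows "\<not> (\<exists>k\<le>N. 1 / real N = node N k)"
proof
  assume "\<exists>k\<le>N. 1 / real N = node N k"
  then obtain k where "1 / real N = (2 * real k - real N) / real N"
    using node_eq[OF assms(2)] by auto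
  then have "real (2 * k) = real (N + 1)" using assms(2) by (simp add: divide_cancel_right)
  then have "2 * k = N + 1" by (simp only: of_nat_eq_iff)
  with \<open>even N\<close> show False by presburger
qed

lemma Dsum_inverse_ge:
  assumes "4 dvd N" and "0 < N"
  shows "4/3 * real N \<le> Dsum N (1 / real N)"
proof -
  obtain h where N: "N = 2 * h" and "even h"
    using \<open>4 dvd N\<close> by (metis dvd_mult_right even_mult_iff mult.assoc dvdE numeral_Bit0 mult_2)
  have "2 \<le> h" using assms N \<open>even h\<close> by presburger
  have "Dsum N (1 / real N) = (\<Sum>k\<le>2*h. real N * ((-1)^k / (2 * real h + 1 - 2 * real k)))"
  proof -
    have "1 / real N - node N k = (2 * real h + 1 - 2 * real k) / real N" for k
      unfolding node_eq[OF \<open>0 < N\<close>] using \<open>0 < N\<close> N by (simp add: field_simps)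
    then show ?thesis unfolding Dsum_def N by (simp add: atLeast0AtMost mult.commute)
  qed
  also have "\<dots> = real N * (\<Sum>k\<le>2*h. (-1)^k / (2 * real h + 1 - 2 * real k))"
    by (simp add: sum_distrib_left)
  finally show ?thesis
    using alternating_odd_reciprocals_ge[OF \<open>even h\<close> \<open>2 \<le> h\<close>] \<open>0 < N\<close> by simp
qed

lemma fm_grid_midpoint_affine:
  assumes mS: "m = S^2" and S: "4 dvd S" "8 \<le> S" and "0 < r"
  shows "fm m ((2 * real r + 2 * real q) / (2 * real r * real m))
       + fm m ((2 * real r + 2 * real q + 2) / (2 * real r * real m))
       = 2 * fm m ((2 * real r + 2 * real q + 1) / (2 * real r * real m))"
proof -
  define D where "D = 2 * real r * real m"
  define c where "c = Suc (q div r)"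
  have "q = r * (q div r) + q mod r" and "q mod r < r" using \<open>0 < r\<close> by simp_all
  then have "r * (q div r) \<le> q" and "q < r * (q div r) + r" by linarith+
  then have lo: "real r * real c \<le> real r + real q" and hi: "real r + real q + 1 \<le> real r * (real c + 1)"
    unfolding c_def by (simp_all add: algebra_simps flip: of_nat_mult of_nat_add of_nat_le_iff)
  have "0 < real m" using mS S by simp
  then have D: "0 < D" unfolding D_def using \<open>0 < r\<close> by simp
  have "real c / real m = 2 * (real r * real c) / D"
    unfolding D_def using \<open>0 < r\<close> by simp
  also have "\<dots> \<le> (2 * real r + 2 * real q) / D"
    using lo D by (intro divide_right_mono) simp_all
  finally have cell_lo: "real c / real m \<le> (2 * real r + 2 * real q) / D" .
  have "(2 * real r + 2 * real q + 2) / D \<le> 2 * (real r * (real c + 1)) / D"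
    using hi D by (intro divide_right_mono) simp_all
  also have "\<dots> = (real c + 1) / real m"
    unfolding D_def using \<open>0 < r\<close> by simp
  finally have cell_hi: "(2 * real r + 2 * real q + 2) / D \<le> (real c + 1) / real m" .
  have "(2 * real r + 2 * real q) / D \<le> (2 * real r + 2 * real q + 2) / D"
    using D by (intro divide_right_mono) simp_all
  from fm_midpoint_affine[OF mS S cell_lo this cell_hi]
  have "fm m ((2 * real r + 2 * real q) / D) + fm m ((2 * real r + 2 * real q + 2) / D)
    = 2 * fm m (((2 * real r + 2 * real q) / D + (2 * real r + 2 * real q + 2) / D) / 2)" .
  also have "((2 * real r + 2 * real q) / D + (2 * real r + 2 * real q + 2) / D) / 2
    = (2 * real r + 2 * real q + 1) / D"
    using D by (simp add: field_simps)
  finally show ?thesis unfolding D_def .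
qed

lemma Nsum_fm_inverse_eq:
  assumes "0 < m" and "0 < r" and N: "N = 4 * m * r"
  shows "Nsum N (fm m) (1 / real N) = - (\<Sum>j<Suc N - 2 * r * (m + 1).
    (-1)^j * (real N * fm m ((2 * real r + real j) / (2 * real r * real m))) / (4 * real r - 1 + 2 * real j))"
proof -
  have "0 < N" using N assms by simp
  have RN: "real N = 4 * real m * real r" using N by simp
  define k0 where "k0 = 2 * r * (m + 1)"
  define J where "J = Suc N - k0"
  define t where "t k = (-1)^k * fm m (node N k) / (1 / real N - node N k)" for k
  have "k0 \<le> N" using N assms unfolding k0_def by (simp add: algebra_simps)
  then have "Nsum N (fm m) (1 / real N) = (\<Sum>k<k0 + J. t k)"
    unfolding Nsum_def t_def J_def by (simp add: atLeast0AtMost lessThan_Suc_atMost)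
  also have "\<dots> = (\<Sum>k<k0. t k) + (\<Sum>j<J. t (k0 + j))" by (rule sum_lessThan_add)
  also have "(\<Sum>k<k0. t k) = 0"
  proof (intro sum.neutral ballI)
    fix k assume "k \<in> {..<k0}"
    then have "real k < real k0" by simp
    then have "2 * real k - real N < 4 * real r" unfolding k0_def RN by (simp add: algebra_simps)
    then have "node N k < 4 * real r / real N"
      unfolding node_eq[OF \<open>0 < N\<close>] using \<open>0 < N\<close> by (simp add: divide_strict_right_mono)
    also have "\<dots> = 1 / real m" unfolding RN using assms by simp
    finally show "t k = 0" unfolding t_def using fm_eq_0_below by simp
  qed
  also have "(\<Sum>j<J. t (k0 + j)) = (\<Sum>j<J. - ((-1)^j * (real N * fm m
    ((2 * real r + real j) / (2 * real r * real m))) / (4 * real r - 1 + 2 * real j)))"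
  proof (rule sum.cong)
    fix j
    define x where "x = (2 * real r + real j) / (2 * real r * real m)"
    define d where "d = 4 * real r - 1 + 2 * real j"
    have x: "node N (k0 + j) = x"
      unfolding node_eq[OF \<open>0 < N\<close>] k0_def RN x_def using assms by (simp add: field_simps)
    have "(-1::real)^(k0 + j) = (-1)^j" unfolding k0_def by (simp add: power_add)
    moreover have "1 / real N - x = - (d / real N)"
      unfolding x_def RN d_def using assms by (simp add: field_simps)
    ultimately have "t (k0 + j) = (-1)^j * fm m x / (- (d / real N))"
      unfolding t_def x by simp
    then show "t (k0 + j) = - ((-1)^j * (real N * fm m x) / d)" by simp
  qed simp
  finally show ?thesis unfolding J_def k0_def by (simp add: sum_negf)
qed

lemma Nsum_fm_inverse_ge:
  assumes mS: "m = S^2" and S: "4 dvd S" "8 \<le> S" and N: "N = 4 * m * r" and "0 < r"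
  shows "-1 \<le> Nsum N (fm m) (1 / real N)"
proof -
  have m: "0 < real m" using mS S by simp
  have r: "1 \<le> real r" using \<open>0 < r\<close> by simp
  define G where "G j = real N * fm m ((2 * real r + real j) / (2 * real r * real m))" for j
  define w where "w j = 1 / (4 * real r - 1 + 2 * real j)" for j
  have "G 0 = 0"
    unfolding G_def using fm_first_piece[OF _ _ mS S(2), of "1 / real m"] m r by simp
  moreover have "G (2*q) + G (2*q+2) = 2 * G (2*q+1)" for q
    using fm_grid_midpoint_affine[OF mS S \<open>0 < r\<close>, of q]
    unfolding G_def by (simp add: algebra_simps flip: distrib_left)
  moreover have "\<bar>G j\<bar> \<le> 4 * real r" for j
  proof -
    have "\<bar>G j\<bar> \<le> real N * (1 / real m)"
      unfolding G_def abs_mult abs_of_nat using abs_fm_le[OF mS S] by (intro mult_left_mono) auto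
    then show ?thesis unfolding N using m by simp
  qed
  ultimately have "(\<Sum>j<n. (-1)^j * G j) \<le> 4 * real r / 2" for n
    by (rule alternating_sum_midpoint_affine_le)
  moreover have "w (Suc j) \<le> w j" and "0 \<le> w j" for j
    unfolding w_def using r by (simp_all add: frac_le)
  ultimately have "(\<Sum>j<n. (-1)^j * G j * w j) \<le> 4 * real r / 2 * w 0" for n
    by (intro abel_inequality)
  also have "4 * real r / 2 * w 0 \<le> 1" unfolding w_def using r by (simp add: field_simps)
  finally show ?thesis
    using Nsum_fm_inverse_eq[of m r N] m \<open>0 < r\<close> N unfolding G_def w_def by simp
qed

lemma berrut_fm_inverse_ge:
  assumes mS: "m = S^2" and S: "4 dvd S" "8 \<le> S" and "4 * m dvd N" and "0 < N"
  shows "-3 / (4 * real N) \<le> berrut N (fm m) (1 / real N)"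
proof -
  obtain r where N: "N = 4 * m * r" using \<open>4 * m dvd N\<close> by blast
  with \<open>0 < N\<close> have "0 < r" by simp
  have "4 dvd N" using N by simp
  have D: "4/3 * real N \<le> Dsum N (1 / real N)" by (rule Dsum_inverse_ge[OF \<open>4 dvd N\<close> \<open>0 < N\<close>])
  with \<open>0 < N\<close> have "0 < Dsum N (1 / real N)" by linarith
  have "-3 / (4 * real N) \<le> -1 / Dsum N (1 / real N)"
    using D \<open>0 < N\<close> by (simp add: field_simps)
  also have "\<dots> \<le> Nsum N (fm m) (1 / real N) / Dsum N (1 / real N)"
    using Nsum_fm_inverse_ge[OF mS S N \<open>0 < r\<close>] \<open>0 < Dsum N (1 / real N)\<close>
    by (intro divide_right_mono) simp_all
  also have "\<dots> = berrut N (fm m) (1 / real N)"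
    unfolding berrut_def using inverse_not_node[OF _ \<open>0 < N\<close>] \<open>4 dvd N\<close> by auto
  finally show ?thesis .
qed

lemma nseq_Suc: "nseq (Suc i) = (nseq i)^2"
  unfolding nseq_def by (simp add: power_mult[symmetric] mult.commute)

lemma two_le_two_power: "0 < i \<Longrightarrow> 2 \<le> (2::nat) ^ i"
  using power_increasing[of 1 i "2::nat"] by simp

lemma four_dvd_nseq: "0 < i \<Longrightarrow> 4 dvd nseq i"
  unfolding nseq_def using le_imp_power_dvd[OF two_le_two_power, of i 2] by simp

lemma nseq_ge_16:
  assumes "2 \<le> i"
  shows "16 \<le> nseq i"
proof -
  have "(2::nat) ^ 2 \<le> 2 ^ i" using assms by (rule power_increasing) simp
  then have "(2::nat) ^ 4 \<le> 2 ^ 2 ^ i" by (intro power_increasing) simp_all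
  then show ?thesis unfolding nseq_def by simp
qed

lemma four_nseq_dvd_nseq:
  assumes "0 < i" and "i < j"
  shows "4 * nseq i dvd nseq j"
proof -
  have "(2::nat) ^ Suc i \<le> 2 ^ j" using assms by (intro power_increasing) simp_all
  then have "2 + 2 ^ i \<le> (2::nat) ^ j" using two_le_two_power[OF \<open>0 < i\<close>] by simp
  then have "(2::nat) ^ (2 + 2 ^ i) dvd 2 ^ 2 ^ j" by (rule le_imp_power_dvd)
  then show ?thesis unfolding nseq_def by (simp add: power_add)
qed

theorem lemma1:
  fixes i j :: nat
  assumes "100 \<le> i" and "i < j"
  shows "fm (nseq i) (tpt (nseq j)) = 0 \<and>
         berrut (nseq j) (fm (nseq i)) (tpt (nseq j)) \<ge> - 9 / (8 * real (nseq j))"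
proof -
  obtain k where i: "i = Suc k" using assms(1) by (cases i) auto
  have m: "nseq i = (nseq k)^2" and S: "4 dvd nseq k" "8 \<le> nseq k"
    using assms(1) nseq_Suc four_dvd_nseq nseq_ge_16[of k] unfolding i by simp_all
  have dvd: "4 * nseq i dvd nseq j" using assms by (intro four_nseq_dvd_nseq) simp_all
  have pos: "0 < nseq i" "0 < nseq j" unfolding nseq_def by simp_all
  then have "nseq i < nseq j" using dvd_imp_le[OF dvd] by simp
  then have "fm (nseq i) (1 / real (nseq j)) = 0"
    using pos by (intro fm_eq_0_below) (simp add: frac_less2)
  moreover have "- 9 / (8 * real (nseq j)) \<le> -3 / (4 * real (nseq j))"
    using pos by (simp add: field_simps)
  ultimately show ?thesis
    using berrut_fm_inverse_ge[OF m S dvd pos(2)] unfolding tpt_def by simp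
qed

end
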